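(* Let $G$ be a symmetric star topology with compute nodes $V_C$, where $w_v$ is the bandwidth of the edges between compute node $v$ and the center. Let $R,S$ be sets with $|R|<|S|$, $N=|R|+|S|$, initially partitioned among the compute nodes with $N_v$ elements (of $R$ and $S$ together) at node $v$. Let $V_\alpha=\{v\in V_C:\min\{N_v,N-N_v\}<|R|\}$ and $V_\beta=V_C\setminus V_\alpha$. Then any algorithm computing $R\times S$ has (tuple) cost $\Omega(C)$, where \[C=\max\Big\{\max_{v\in V_\alpha}\frac{\min\{N_v,N-N_v\}}{w_v},\ \max_{v\in V_\beta}\frac{|R|}{w_v}\Big\}.\]
   Context: Topology-aware model: the network is a directed graph; each edge $e$ has bandwidth $w_e>0$; compute nodes store data and compute, other nodes only route. A symmetric star topology has compute nodes each connected to a single central routing node by an edge in each direction with equal bandwidth. The input is partitioned without duplication; the algorithm knows topology, bandwidths and local fragment sizes. Computation proceeds in synchronous rounds; the tuple cost of a round is $\max_e|Y(e)|/w_e$ with $|Y(e)|$ the number of elements routed through edge $e$; total cost is the sum over rounds. Computing $R\times S$ means every pair $(r,s)\in R\times S$ is emitted by at least one compute node holding both $r$ and $s$. *)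

theory Defs
  imports Main "HOL.Real"
begin

text \<open>Symmetric star topology: compute nodes are the elements of a finite set V of naturals,
  plus an implicit central routing node. Compute node v is connected to the centre by an edge
  v -> centre and an edge centre -> v, both of bandwidth w v.\<close>

type_synonym elem = "nat + nat"

text \<open>A round: snd u v is the set of elements compute node u sends to compute node v
  (routed along u -> centre -> v).\<close>
type_synonym round = "nat \<Rightarrow> nat \<Rightarrow> elem set"

definition input_elems :: "nat set \<Rightarrow> nat set \<Rightarrow> elem set" where
  "input_elems R S = Inl ` R \<union> Inr ` S"

definition init_state :: "nat set \<Rightarrow> nat set \<Rightarrow> (elem \<Rightarrow> nat) \<Rightarrow> nat \<Rightarrow> elem set" where
  "init_state R S loc v = {x \<in> input_elems R S. loc x = v}"

definition step :: "(nat \<Rightarrow> elem set) \<Rightarrow> round \<Rightarrow> nat \<Rightarrow> elem set" where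
  "step K r v = K v \<union> (\<Union>u. r u v)"

fun exec :: "(nat \<Rightarrow> elem set) \<Rightarrow> round list \<Rightarrow> nat \<Rightarrow> elem set" where
  "exec K [] = K"
| "exec K (r # rs) = exec (step K r) rs"

fun valid_rounds :: "nat set \<Rightarrow> (nat \<Rightarrow> elem set) \<Rightarrow> round list \<Rightarrow> bool" where
  "valid_rounds V K [] = True"
| "valid_rounds V K (r # rs) =
     ((\<forall>u v. r u v \<subseteq> K u \<and> (r u v \<noteq> {} \<longrightarrow> u \<in> V \<and> v \<in> V))
      \<and> valid_rounds V (step K r) rs)"

text \<open>Elements routed through edge v -> centre, and through edge centre -> v.\<close>
definition out_load :: "nat set \<Rightarrow> round \<Rightarrow> nat \<Rightarrow> elem set" where
  "out_load V r v = (\<Union>x\<in>V - {v}. r v x)"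

definition in_load :: "nat set \<Rightarrow> round \<Rightarrow> nat \<Rightarrow> elem set" where
  "in_load V r v = (\<Union>u\<in>V - {v}. r u v)"

definition round_cost :: "nat set \<Rightarrow> (nat \<Rightarrow> real) \<Rightarrow> round \<Rightarrow> real" where
  "round_cost V w r =
     Max ((\<lambda>v. real (card (out_load V r v)) / w v) ` V
          \<union> (\<lambda>v. real (card (in_load V r v)) / w v) ` V)"

definition total_cost :: "nat set \<Rightarrow> (nat \<Rightarrow> real) \<Rightarrow> round list \<Rightarrow> real" where
  "total_cost V w rs = (\<Sum>r\<leftarrow>rs. round_cost V w r)"

text \<open>The algorithm computes R x S: every pair is held (and hence can be emitted) by some
  compute node at the end (knowledge is monotone over rounds).\<close>
definition computes_product :: "nat set \<Rightarrow> nat set \<Rightarrow> nat set \<Rightarrow> (nat \<Rightarrow> elem set) \<Rightarrow> bool" where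
  "computes_product V R S K \<longleftrightarrow>
     (\<forall>r\<in>R. \<forall>s\<in>S. \<exists>v\<in>V. Inl r \<in> K v \<and> Inr s \<in> K v)"

definition Nv :: "nat set \<Rightarrow> nat set \<Rightarrow> (elem \<Rightarrow> nat) \<Rightarrow> nat \<Rightarrow> nat" where
  "Nv R S loc v = card (init_state R S loc v)"

definition mv :: "nat set \<Rightarrow> nat set \<Rightarrow> (elem \<Rightarrow> nat) \<Rightarrow> nat \<Rightarrow> nat" where
  "mv R S loc v = min (Nv R S loc v) (card R + card S - Nv R S loc v)"

definition V_alpha :: "nat set \<Rightarrow> nat set \<Rightarrow> nat set \<Rightarrow> (elem \<Rightarrow> nat) \<Rightarrow> nat set" where
  "V_alpha V R S loc = {v \<in> V. mv R S loc v < card R}"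

definition V_beta :: "nat set \<Rightarrow> nat set \<Rightarrow> nat set \<Rightarrow> (elem \<Rightarrow> nat) \<Rightarrow> nat set" where
  "V_beta V R S loc = V - V_alpha V R S loc"

definition star_C :: "nat set \<Rightarrow> (nat \<Rightarrow> real) \<Rightarrow> nat set \<Rightarrow> nat set \<Rightarrow> (elem \<Rightarrow> nat) \<Rightarrow> real" where
  "star_C V w R S loc =
     Max ((\<lambda>v. real (mv R S loc v) / w v) ` V_alpha V R S loc
          \<union> (\<lambda>v. real (card R) / w v) ` V_beta V R S loc)"

end

(* Fix a compute node v and let K be the data it holds initially. An element of K can reach
   another node only by crossing the edge v -> centre, and an element outside K can reach v
   only by crossing centre -> v. Every pair (r, s) whose members are split by K must meet at
   some node, so one of its members crosses. Hence either all of K leaves, or everything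
   outside K arrives, or all of R (or all of S, which is larger) crosses in one direction or
   the other: at least min (N_v, N - N_v, |R|) elements use v's two edges, and each edge's
   traffic divided by w_v is a lower bound for the total cost. So C <= 2 * cost. *)
theory Submission
  imports Defs
begin

definition traffic :: "(round \<Rightarrow> elem set) \<Rightarrow> round list \<Rightarrow> elem set" where
  "traffic L rs = (\<Union>r\<in>set rs. L r)"

lemma traffic_Nil [simp]: "traffic L [] = {}"
  and traffic_Cons [simp]: "traffic L (r # rs) = L r \<union> traffic L rs"
  by (simp_all add: traffic_def)

lemma round_cost_ge_out_load:
  assumes "finite V" "v \<in> V"
  shows "real (card (out_load V r v)) / w v \<le> round_cost V w r"
  unfolding round_cost_def using assms by (auto intro!: Max_ge)

lemma round_cost_ge_in_load:
  assumes "finite V" "v \<in> V"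
  shows "real (card (in_load V r v)) / w v \<le> round_cost V w r"
  unfolding round_cost_def using assms by (auto intro!: Max_ge)

lemma total_cost_ge_traffic:
  assumes "c > 0" and load_le: "\<And>r. real (card (L r)) / c \<le> round_cost V w r"
  shows "real (card (traffic L rs)) / c \<le> total_cost V w rs"
proof (induction rs)
  case Nil
  then show ?case by (simp add: total_cost_def)
next
  case (Cons r rs)
  have "real (card (traffic L (r # rs))) / c \<le> real (card (L r)) / c + real (card (traffic L rs)) / c"
    using card_Un_le[of "L r" "traffic L rs"] \<open>c > 0\<close>
    by (simp add: add_divide_distrib[symmetric] divide_right_mono)
  also have "\<dots> \<le> round_cost V w r + total_cost V w rs"
    using load_le Cons.IH by (rule add_mono)
  finally show ?case by (simp add: total_cost_def)
qed

lemma valid_rounds_send_within: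
  assumes "valid_rounds V K rs" "\<And>u. K u \<subseteq> E" "r \<in> set rs"
  shows "r u x \<subseteq> E"
  using assms
proof (induction rs arbitrary: K)
  case (Cons r' rs)
  have "r' a b \<subseteq> K a" for a b
    using Cons.prems(1) by simp
  with Cons.prems(2) have sent_E: "r' a b \<subseteq> E" for a b by blast
  with Cons.prems(2) have "step K r' a \<subseteq> E" for a
    unfolding step_def by blast
  then show ?case
    using Cons.IH[of "step K r'"] Cons.prems(1,3) sent_E by (cases "r = r'") auto
qed simp

lemma exec_not_held_if_never_sent:
  assumes "valid_rounds V K rs" "x \<notin> traffic (\<lambda>r. out_load V r v) rs"
    "\<And>u. u \<noteq> v \<Longrightarrow> x \<notin> K u" "u \<noteq> v"
  shows "x \<notin> exec K rs u"
  using assms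
proof (induction rs arbitrary: K)
  case (Cons r rs)
  have held: "r a b \<subseteq> K a" and ends: "r a b \<noteq> {} \<Longrightarrow> b \<in> V" for a b
    using Cons.prems(1) by auto
  have "x \<notin> step K r u'" if "u' \<noteq> v" for u'
  proof -
    have sent_by_v: "x \<notin> r v u'"
    proof
      assume "x \<in> r v u'"
      with ends that have "x \<in> out_load V r v" by (auto simp: out_load_def)
      with Cons.prems(2) show False by simp
    qed
    have "x \<notin> r a u'" for a
    proof (cases "a = v")
      case False
      then show ?thesis using held Cons.prems(3) by blast
    qed (use sent_by_v in simp)
    then show ?thesis
      using Cons.prems(3)[OF that] by (auto simp: step_def)
  qed
  with Cons show ?case by simp
qed simp

lemma exec_not_held_if_never_received:
  assumes "valid_rounds V K rs" "x \<notin> traffic (\<lambda>r. in_load V r v) rs" "x \<notin> K v"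
  shows "x \<notin> exec K rs v"
  using assms
proof (induction rs arbitrary: K)
  case (Cons r rs)
  have "x \<notin> step K r v"
    using Cons.prems by (fastforce simp: step_def in_load_def)
  with Cons show ?case by simp
qed simp

text \<open>K plays the data initially held by a node, X and Y the data it sends and receives.\<close>
lemma crossing_cover_card_bound:
  fixes A B K X Y :: "'a set"
  assumes "finite A" "finite B" "finite X" "finite Y" "card A \<le> card B"
    and cover_out: "\<And>a b. a \<in> A \<inter> K \<Longrightarrow> b \<in> B - K \<Longrightarrow> a \<in> X \<or> b \<in> Y"
    and cover_in: "\<And>a b. b \<in> B \<inter> K \<Longrightarrow> a \<in> A - K \<Longrightarrow> b \<in> X \<or> a \<in> Y"
  shows "min (min (card ((A \<union> B) \<inter> K)) (card ((A \<union> B) - K))) (card A) \<le> card X + card Y"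
proof -
  have "A \<inter> K \<subseteq> X \<or> B - K \<subseteq> Y" "B \<inter> K \<subseteq> X \<or> A - K \<subseteq> Y"
    using cover_out cover_in by blast+
  then consider "(A \<union> B) \<inter> K \<subseteq> X" | "(A \<union> B) - K \<subseteq> Y"
    | "A \<inter> K \<subseteq> X" "A - K \<subseteq> Y" | "B \<inter> K \<subseteq> X" "B - K \<subseteq> Y"
    by blast
  then show ?thesis
  proof cases
    case 1
    then have "card ((A \<union> B) \<inter> K) \<le> card X"
      by (rule card_mono[OF \<open>finite X\<close>])
    then show ?thesis by linarith
  next
    case 2
    then have "card ((A \<union> B) - K) \<le> card Y"
      by (rule card_mono[OF \<open>finite Y\<close>])
    then show ?thesis by linarith
  next
    case 3
    have "card A = card (A \<inter> K) + card (A - K)"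
      using \<open>finite A\<close> by (rule card_Int_Diff)
    also have "\<dots> \<le> card X + card Y"
      using 3 assms(3,4) by (intro add_mono card_mono)
    finally show ?thesis by linarith
  next
    case 4
    have "card A \<le> card (B \<inter> K) + card (B - K)"
      using \<open>card A \<le> card B\<close> card_Int_Diff[OF \<open>finite B\<close>] by simp
    also have "\<dots> \<le> card X + card Y"
      using 4 assms(3,4) by (intro add_mono card_mono)
    finally show ?thesis by linarith
  qed
qed

lemma node_crossings_lower_bound:
  assumes "finite R" "finite S" "card R \<le> card S"
    and valid: "valid_rounds V (init_state R S loc) rs"
    and computes: "computes_product V R S (exec (init_state R S loc) rs)"
  shows "min (mv R S loc v) (card R)
    \<le> card (traffic (\<lambda>r. out_load V r v) rs) + card (traffic (\<lambda>r. in_load V r v) rs)"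
    (is "_ \<le> card ?sent + card ?recv")
proof -
  define K where "K = init_state R S loc"
  define E where "E = input_elems R S"
  have "finite E"
    using assms(1,2) by (simp add: E_def input_elems_def)
  have K_E: "K u \<subseteq> E" for u
    by (auto simp: K_def E_def init_state_def)
  have "?sent \<subseteq> E" "?recv \<subseteq> E"
    using valid_rounds_send_within[OF valid[folded K_def] K_E]
    by (auto simp: traffic_def out_load_def in_load_def)
  then have "finite ?sent" "finite ?recv"
    using \<open>finite E\<close> finite_subset by blast+
  have cover: "x \<in> ?sent \<or> y \<in> ?recv"
    if "x \<in> K v" "y \<in> E - K v" "\<exists>u\<in>V. x \<in> exec K rs u \<and> y \<in> exec K rs u" for x y
  proof (rule ccontr)
    assume "\<not> (x \<in> ?sent \<or> y \<in> ?recv)"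
    moreover have "x \<notin> K u" if "u \<noteq> v" for u
      using \<open>x \<in> K v\<close> that by (simp add: K_def init_state_def)
    ultimately have x_away: "x \<notin> exec K rs u" if "u \<noteq> v" for u
      using exec_not_held_if_never_sent[OF valid[folded K_def]] that by blast
    have y_absent: "y \<notin> exec K rs v"
      using exec_not_held_if_never_received[OF valid[folded K_def]]
        \<open>\<not> (x \<in> ?sent \<or> y \<in> ?recv)\<close> \<open>y \<in> E - K v\<close> by blast
    with that(3) x_away show False by metis
  qed
  have held_together: "\<exists>u\<in>V. Inl a \<in> exec K rs u \<and> Inr b \<in> exec K rs u"
    if "a \<in> R" "b \<in> S" for a b
    using computes that by (simp add: computes_product_def K_def)
  have "min (min (card (E \<inter> K v)) (card (E - K v))) (card (Inl ` R :: elem set))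
      \<le> card ?sent + card ?recv"
    unfolding E_def input_elems_def
  proof (rule crossing_cover_card_bound)
    show "card (Inl ` R :: elem set) \<le> card (Inr ` S :: elem set)"
      using \<open>card R \<le> card S\<close> by (simp add: card_image)
    show "a \<in> ?sent \<or> b \<in> ?recv" if ab: "a \<in> Inl ` R \<inter> K v" "b \<in> Inr ` S - K v" for a b
    proof -
      obtain a' b' where "a' \<in> R" "b' \<in> S" "a = Inl a'" "b = Inr b'" using ab by blast
      then show ?thesis
        using cover[of a b] held_together[of a' b'] ab by (auto simp: E_def input_elems_def)
    qed
    show "b \<in> ?sent \<or> a \<in> ?recv" if ab: "b \<in> Inr ` S \<inter> K v" "a \<in> Inl ` R - K v" for a b
    proof -
      obtain a' b' where "a' \<in> R" "b' \<in> S" "a = Inl a'" "b = Inr b'" using ab by blast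
      then show ?thesis
        using cover[of b a] held_together[of a' b'] ab by (auto simp: E_def input_elems_def)
    qed
  qed (use assms(1,2) \<open>finite ?sent\<close> \<open>finite ?recv\<close> in auto)
  moreover have "card E = card R + card S"
    using assms(1,2) unfolding E_def input_elems_def
    by (subst card_Un_disjoint) (auto simp: card_image)
  then have "min (card (E \<inter> K v)) (card (E - K v)) = mv R S loc v"
    using K_E[of v] \<open>finite E\<close>
    by (simp add: mv_def Nv_def K_def Int_absorb1 card_Diff_subset finite_subset)
  ultimately show ?thesis
    by (simp add: card_image)
qed

lemma node_cost_lower_bound:
  assumes "finite V" "v \<in> V" "w v > 0" "finite R" "finite S" "card R \<le> card S"
    and "valid_rounds V (init_state R S loc) rs"
    and "computes_product V R S (exec (init_state R S loc) rs)"
  shows "real (min (mv R S loc v) (card R)) / w v \<le> 2 * total_cost V w rs"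
proof -
  let ?sent = "traffic (\<lambda>r. out_load V r v) rs" and ?recv = "traffic (\<lambda>r. in_load V r v) rs"
  have "real (min (mv R S loc v) (card R)) \<le> real (card ?sent + card ?recv)"
    using node_crossings_lower_bound[OF assms(4-)] by (rule of_nat_mono)
  then have "real (min (mv R S loc v) (card R)) / w v \<le> real (card ?sent + card ?recv) / w v"
    using \<open>w v > 0\<close> by (simp add: divide_right_mono)
  also have "\<dots> = real (card ?sent) / w v + real (card ?recv) / w v"
    by (simp add: add_divide_distrib)
  also have "\<dots> \<le> total_cost V w rs + total_cost V w rs"
    using assms(1-3)
    by (intro add_mono total_cost_ge_traffic round_cost_ge_out_load round_cost_ge_in_load)
  finally show ?thesis by simp
qed

lemma star_C_eq_Max:
  "star_C V w R S loc = Max ((\<lambda>v. real (min (mv R S loc v) (card R)) / w v) ` V)"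
proof -
  let ?c = "\<lambda>v. real (min (mv R S loc v) (card R)) / w v"
  have "V = V_alpha V R S loc \<union> V_beta V R S loc"
    by (auto simp: V_alpha_def V_beta_def)
  then have "?c ` V = ?c ` V_alpha V R S loc \<union> ?c ` V_beta V R S loc"
    by (metis image_Un)
  also have "?c ` V_alpha V R S loc = (\<lambda>v. real (mv R S loc v) / w v) ` V_alpha V R S loc"
    by (rule image_cong) (auto simp: V_alpha_def)
  also have "?c ` V_beta V R S loc = (\<lambda>v. real (card R) / w v) ` V_beta V R S loc"
    by (rule image_cong) (auto simp: V_alpha_def V_beta_def)
  finally show ?thesis
    by (simp add: star_C_def)
qed

theorem theorem8:
  shows "\<exists>c::real. c > 0 \<and>
    (\<forall>(V::nat set) (w::nat \<Rightarrow> real) (R::nat set) (S::nat set) (loc::elem \<Rightarrow> nat) (rs::round list).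
       finite V \<and> V \<noteq> {} \<and> (\<forall>v\<in>V. w v > 0) \<and>
       finite R \<and> finite S \<and> card R < card S \<and>
       (\<forall>x\<in>input_elems R S. loc x \<in> V) \<and>
       valid_rounds V (init_state R S loc) rs \<and>
       computes_product V R S (exec (init_state R S loc) rs)
       \<longrightarrow> total_cost V w rs \<ge> c * star_C V w R S loc)"
proof (intro exI[of _ "1/2"] conjI allI impI)
  fix V :: "nat set" and w :: "nat \<Rightarrow> real" and R S :: "nat set"
    and loc :: "elem \<Rightarrow> nat" and rs :: "round list"
  assume hyps: "finite V \<and> V \<noteq> {} \<and> (\<forall>v\<in>V. w v > 0) \<and>
       finite R \<and> finite S \<and> card R < card S \<and>
       (\<forall>x\<in>input_elems R S. loc x \<in> V) \<and>
       valid_rounds V (init_state R S loc) rs \<and>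
       computes_product V R S (exec (init_state R S loc) rs)"
  have "real (min (mv R S loc v) (card R)) / w v \<le> 2 * total_cost V w rs" if "v \<in> V" for v
    using hyps that by (intro node_cost_lower_bound) auto
  with hyps have "star_C V w R S loc \<le> 2 * total_cost V w rs"
    unfolding star_C_eq_Max by (intro Max.boundedI) auto
  then show "total_cost V w rs \<ge> 1/2 * star_C V w R S loc" by simp
qed simp

end
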